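(* In the toy model (see context), let $S=\sum_{i=0}^{L-1}[\![\Delta\alpha_i]\!]$ and $\omega_i=\Delta\alpha_i-[\![\Delta\alpha_i]\!]$. Define an integer vector $\vec J$ by: if $S\ge0$, $J_i=1$ for the $S+1$ indices $i$ with the smallest values of $\omega_i$ and $J_i=0$ otherwise; if $S<0$, $J_i=-1$ for the $|S|-1$ indices $i$ with the largest values of $\omega_i$ and $J_i=0$ otherwise. Let $k^+\in\{0,\dots,L-1\}$ be given by $k^+\equiv\sum_{i=0}^{L-1}i\,(-[\![\Delta\alpha_i]\!]+J_i)\pmod L$. Then the almost surely unique (up to adding a common integer) threshold configuration $\vec m^+$ of the toy model satisfies $$\Delta m^+_i=-[\![\Delta\alpha_i]\!]+J_i-\delta_{ik^+}\quad\text{for all }i.$$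
   Context: Toy model: $L$ sites with periodic boundary conditions (indices mod $L$); disorder $\alpha_0,\dots,\alpha_{L-1}$ i.i.d. uniform on $(-\tfrac12,\tfrac12)$, extended periodically; $\Delta x_i=x_{i-1}-2x_i+x_{i+1}$ is the periodic discrete Laplacian; $[\![x]\!]$ denotes the integer nearest to $x$; $\delta_{ik}$ is the Kronecker delta. A configuration is $\vec m\in\mathbb Z^L$, with (rescaled, zero-force) well coordinates $z_i=\Delta m_i+\Delta\alpha_i$. A threshold configuration is a configuration $\vec m^+$ attaining $\min_{\vec m\in\mathbb Z^L}\max_i z_i$. *)

theory Defs
  imports "HOL-Analysis.Analysis"
begin

definition lap :: "nat \<Rightarrow> (nat \<Rightarrow> 'a::comm_ring_1) \<Rightarrow> nat \<Rightarrow> 'a" where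
  "lap L x i = x ((i + L - 1) mod L) - 2 * x (i mod L) + x ((i + 1) mod L)"

definition zcoord :: "nat \<Rightarrow> (nat \<Rightarrow> real) \<Rightarrow> (nat \<Rightarrow> int) \<Rightarrow> nat \<Rightarrow> real" where
  "zcoord L \<alpha> m i = real_of_int (lap L m i) + lap L \<alpha> i"

definition maxz :: "nat \<Rightarrow> (nat \<Rightarrow> real) \<Rightarrow> (nat \<Rightarrow> int) \<Rightarrow> real" where
  "maxz L \<alpha> m = Max {zcoord L \<alpha> m i | i. i < L}"

text \<open>Threshold configuration: attains the minimum over all configurations of max_i z_i.
  Configurations are m : nat => int, only the values on {0..<L} matter.\<close>
definition threshold_config :: "nat \<Rightarrow> (nat \<Rightarrow> real) \<Rightarrow> (nat \<Rightarrow> int) \<Rightarrow> bool" where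
  "threshold_config L \<alpha> m \<longleftrightarrow> (\<forall>m'. maxz L \<alpha> m \<le> maxz L \<alpha> m')"

definition rnd :: "nat \<Rightarrow> (nat \<Rightarrow> real) \<Rightarrow> nat \<Rightarrow> int" where
  "rnd L \<alpha> i = round (lap L \<alpha> i)"

definition omega :: "nat \<Rightarrow> (nat \<Rightarrow> real) \<Rightarrow> nat \<Rightarrow> real" where
  "omega L \<alpha> i = lap L \<alpha> i - real_of_int (rnd L \<alpha> i)"

definition Ssum :: "nat \<Rightarrow> (nat \<Rightarrow> real) \<Rightarrow> int" where
  "Ssum L \<alpha> = (\<Sum>i<L. rnd L \<alpha> i)"

text \<open>J: if S >= 0, J_i = 1 on the S+1 indices with smallest omega; if S < 0,
  J_i = -1 on the |S|-1 indices with largest omega (ties have probability zero).\<close>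
definition Jvec :: "nat \<Rightarrow> (nat \<Rightarrow> real) \<Rightarrow> nat \<Rightarrow> int" where
  "Jvec L \<alpha> i =
     (if Ssum L \<alpha> \<ge> 0 then
        (if int (card {j. j < L \<and> omega L \<alpha> j < omega L \<alpha> i}) < Ssum L \<alpha> + 1 then 1 else 0)
      else
        (if int (card {j. j < L \<and> omega L \<alpha> j > omega L \<alpha> i}) < \<bar>Ssum L \<alpha>\<bar> - 1 then -1 else 0))"

definition kplus :: "nat \<Rightarrow> (nat \<Rightarrow> real) \<Rightarrow> int" where
  "kplus L \<alpha> = (\<Sum>i<L. int i * (- rnd L \<alpha> i + Jvec L \<alpha> i)) mod int L"

definition disorder :: "nat \<Rightarrow> (nat \<Rightarrow> real) measure" where
  "disorder L = PiM {..<L} (\<lambda>_. uniform_measure lborel {-1/2<..<1/2})"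

end

theory Submission
  imports Defs "HOL-Probability.Probability_Measure"
begin

text \<open>Write \<open>\<Delta>\<alpha>\<^sub>i = r\<^sub>i + \<omega>\<^sub>i\<close> with \<open>r\<^sub>i = [[\<Delta>\<alpha>\<^sub>i]]\<close>, and put \<open>u = \<Delta>m + r\<close>, so that
  \<open>z\<^sub>i = u\<^sub>i + \<omega>\<^sub>i\<close>. The integer vectors of the form \<open>\<Delta>m\<close> are exactly those with vanishing
  sum and first moment divisible by \<open>L\<close>, so \<open>u\<close> ranges over the integer vectors with
  \<open>\<Sigma> u = S\<close> and \<open>\<Sigma> i u\<^sub>i \<equiv> \<Sigma> i r\<^sub>i (mod L)\<close>. Since \<open>|\<omega>\<^sub>i| \<le> 1/2\<close>, minimising \<open>max\<^sub>i (u\<^sub>i + \<omega>\<^sub>i)\<close>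
  under the sum constraint alone means raising the sites with the smallest \<open>\<omega>\<^sub>i\<close> first; the
  greedy profile \<open>J\<close> has sum \<open>S + 1\<close>, and removing one unit, necessarily at the site fixed by
  the moment constraint, yields the unique optimum \<open>J - \<delta>\<^bsub>k\<^sup>+\<^esub>\<close>. The Laplacian is injective up to
  constants, and almost surely the \<open>\<omega>\<^sub>i\<close> are pairwise distinct, because
  \<open>\<Delta>\<alpha>\<^sub>i - \<Delta>\<alpha>\<^sub>j\<close> depends affinely and non-trivially on the single coordinate \<open>\<alpha>\<^sub>i\<close>.\<close>

section \<open>The periodic Laplacian\<close>

definition next_site :: "nat \<Rightarrow> nat \<Rightarrow> nat" where
  "next_site L i = (i + 1) mod L"

definition prev_site :: "nat \<Rightarrow> nat \<Rightarrow> nat" where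
  "prev_site L i = (i + L - 1) mod L"

lemma next_site_eq: "i < L \<Longrightarrow> next_site L i = (if i + 1 = L then 0 else i + 1)"
  unfolding next_site_def by auto

lemma prev_site_eq: "i < L \<Longrightarrow> prev_site L i = (if i = 0 then L - 1 else i - 1)"
  unfolding prev_site_def by (cases i) auto

lemma prev_site_less: "i < L \<Longrightarrow> prev_site L i < L"
  by (auto simp: prev_site_eq)

lemma next_site_prev_site: "i < L \<Longrightarrow> next_site L (prev_site L i) = i"
  by (auto simp: prev_site_eq next_site_eq)

lemma prev_site_next_site: "i < L \<Longrightarrow> prev_site L (next_site L i) = i"
  by (auto simp: prev_site_eq next_site_eq)

lemma lap_eq: "i < L \<Longrightarrow> lap L x i = x (prev_site L i) - 2 * x i + x (next_site L i)"
  unfolding lap_def prev_site_def next_site_def by simp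

lemma sum_next_site: "(\<Sum>i<L. f (next_site L i)) = (\<Sum>i<L. f i)"
proof (cases L)
  case (Suc n)
  have "(\<Sum>i<L. f (next_site L i)) = (\<Sum>i<n. f (next_site L i)) + f (next_site L n)"
    by (simp add: Suc)
  also have "\<dots> = (\<Sum>i<n. f (Suc i)) + f 0"
    by (simp add: Suc next_site_eq)
  also have "\<dots> = (\<Sum>i<L. f i)"
    unfolding Suc by (subst sum.lessThan_Suc_shift) (simp add: add.commute)
  finally show ?thesis .
qed simp

lemma sum_prev_site: "(\<Sum>i<L. f (prev_site L i)) = (\<Sum>i<L. f i)"
proof (cases L)
  case (Suc n)
  have "(\<Sum>i<L. f (prev_site L i)) = f (prev_site L 0) + (\<Sum>i<n. f (prev_site L (Suc i)))"
    unfolding Suc by (rule sum.lessThan_Suc_shift)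
  also have "\<dots> = f n + (\<Sum>i<n. f i)"
    by (simp add: prev_site_eq Suc)
  finally show ?thesis
    unfolding Suc by (simp add: add.commute)
qed simp

lemma sum_lap: "(\<Sum>i<L. lap L x i) = 0"
proof -
  have "(\<Sum>i<L. lap L x i) = (\<Sum>i<L. x (prev_site L i)) - 2 * (\<Sum>i<L. x i) + (\<Sum>i<L. x (next_site L i))"
    by (simp add: lap_eq sum.distrib sum_subtractf sum_distrib_left)
  then show ?thesis
    by (simp add: sum_prev_site sum_next_site)
qed

lemma dvd_moment_lap: "int L dvd (\<Sum>i<L. int i * lap L (m :: nat \<Rightarrow> int) i)"
proof -
  have moment_prev: "(\<Sum>i<L. int i * m (prev_site L i)) = (\<Sum>j<L. int (next_site L j) * m j)"
    using sum_next_site[of "\<lambda>i. int i * m (prev_site L i)" L]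
    by (simp add: prev_site_next_site)
  have moment_next: "(\<Sum>i<L. int i * m (next_site L i)) = (\<Sum>j<L. int (prev_site L j) * m j)"
    using sum_prev_site[of "\<lambda>i. int i * m (next_site L i)" L]
    by (simp add: next_site_prev_site)
  have "(\<Sum>i<L. int i * lap L m i)
      = (\<Sum>j<L. (int (next_site L j) + int (prev_site L j) - 2 * int j) * m j)"
    by (simp add: lap_eq moment_prev moment_next sum.distrib sum_subtractf sum_distrib_left algebra_simps)
  moreover have "int L dvd int (next_site L j) + int (prev_site L j) - 2 * int j" if "j < L" for j
  proof -
    have "int (next_site L j) + int (prev_site L j) - 2 * int j \<in> {0, int L, - int L}"
      using that by (auto simp: next_site_eq prev_site_eq of_nat_diff)
    then show ?thesis by auto
  qed
  ultimately show ?thesis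
    by (auto intro: dvd_sum)
qed

lemma lap_diff: "lap L (\<lambda>i. a i - b i) j = lap L a j - lap L b j"
  unfolding lap_def by (simp add: algebra_simps)

text \<open>A discrete harmonic function has constant increments, and the increments sum to zero
  around the cycle.\<close>
lemma lap_eq_zero_imp_constant:
  fixes d :: "nat \<Rightarrow> int"
  assumes harmonic: "\<And>i. i < L \<Longrightarrow> lap L d i = 0"
  shows "\<forall>i<L. d i = d 0"
proof -
  define D where "D i = d (next_site L i) - d i" for i
  have D_prev: "D i = D (prev_site L i)" if "i < L" for i
    using harmonic[OF that] that by (simp add: D_def lap_eq next_site_prev_site)
  have D_const: "i < L \<Longrightarrow> D i = D 0" for i
  proof (induction i)
    case (Suc k)
    then have "D (Suc k) = D (prev_site L (Suc k))"
      using D_prev by blast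
    then show ?case
      using Suc by (simp add: prev_site_eq)
  qed simp
  have "int L * D 0 = (\<Sum>i<L. D i)"
    using sum.cong[OF refl D_const, of "{..<L}"] by simp
  also have "\<dots> = 0"
    unfolding D_def by (simp add: sum_subtractf sum_next_site)
  finally have D0: "0 < L \<Longrightarrow> D 0 = 0"
    by simp
  show ?thesis
  proof (intro allI impI)
    fix i assume "i < L"
    then show "d i = d 0"
    proof (induction i)
      case (Suc k)
      then have "D k = 0"
        using D_const D0 by auto
      moreover have "next_site L k = Suc k"
        using Suc.prems by (simp add: next_site_eq)
      ultimately show ?case
        using Suc by (simp add: D_def)
    qed simp
  qed
qed

lemma lap_eq_imp_shift:
  fixes m1 m2 :: "nat \<Rightarrow> int"
  assumes "\<And>i. i < L \<Longrightarrow> lap L m1 i = lap L m2 i"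
  shows "\<exists>c. \<forall>i<L. m1 i = m2 i + c"
proof -
  have "lap L (\<lambda>i. m1 i - m2 i) i = 0" if "i < L" for i
    unfolding lap_diff using assms[OF that] by simp
  then have "\<forall>i<L. m1 i - m2 i = m1 0 - m2 0"
    by (rule lap_eq_zero_imp_constant)
  then show ?thesis
    by (intro exI[of _ "m1 0 - m2 0"]) (simp add: algebra_simps)
qed

lemma sum_lessThan_partial_sums:
  "(\<Sum>t<n. \<Sum>i\<le>t. (y :: nat \<Rightarrow> int) i) = (\<Sum>i<n. (int n - int i) * y i)"
proof (induction n)
  case (Suc n)
  have "(\<Sum>i<Suc n. (int (Suc n) - int i) * y i) = (\<Sum>i<Suc n. (int n - int i) * y i + y i)"
    by (rule sum.cong) (auto simp: algebra_simps)
  also have "\<dots> = (\<Sum>i<n. (int n - int i) * y i) + (\<Sum>i\<le>n. y i)"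
    by (simp add: sum.distrib lessThan_Suc_atMost[symmetric])
  finally show ?case
    using Suc.IH by simp
qed simp

text \<open>The preimage is found by summing twice; the additive constant \<open>a\<close> of the increments
  makes the increments sum to zero, which is possible exactly when the moment is divisible by \<open>L\<close>.\<close>
lemma lap_surj:
  fixes y :: "nat \<Rightarrow> int"
  assumes sum0: "(\<Sum>i<L. y i) = 0" and dvd: "int L dvd (\<Sum>i<L. int i * y i)"
  shows "\<exists>m. \<forall>i<L. lap L m i = y i"
proof -
  define a where "a = (\<Sum>i<L. int i * y i) div int L"
  define d where "d j = a + (\<Sum>i\<le>j. y i)" for j
  define m where "m j = (\<Sum>t<j. d t)" for j
  have "(\<Sum>t<L. d t) = int L * a + (\<Sum>i<L. (int L - int i) * y i)"
    by (simp add: d_def sum.distrib sum_lessThan_partial_sums)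
  also have "\<dots> = int L * a + int L * (\<Sum>i<L. y i) - (\<Sum>i<L. int i * y i)"
    by (simp add: algebra_simps sum_subtractf sum_distrib_left)
  also have "\<dots> = 0"
    using dvd sum0 by (simp add: a_def)
  finally have sum_d: "(\<Sum>t<L. d t) = 0" .
  have m_step: "m (next_site L i) - m i = d i" if "i < L" for i
  proof (cases "i + 1 = L")
    case True
    then show ?thesis
      using sum_d by (auto simp: next_site_eq m_def)
  next
    case False
    then show ?thesis
      using that by (simp add: next_site_eq m_def)
  qed
  have d_step: "d i - d (prev_site L i) = y i" if "i < L" for i
  proof (cases i)
    case 0
    moreover have "{..L - 1} = {..<L}"
      using that by auto
    ultimately show ?thesis
      using sum0 that by (simp add: prev_site_eq d_def)
  next
    case (Suc k)
    then show ?thesis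
      using that by (simp add: prev_site_eq d_def)
  qed
  have "lap L m i = y i" if "i < L" for i
  proof -
    have "lap L m i = (m (next_site L i) - m i) - (m (next_site L (prev_site L i)) - m (prev_site L i))"
      using that by (simp add: lap_eq next_site_prev_site)
    also have "\<dots> = d i - d (prev_site L i)"
      using that by (simp add: m_step prev_site_less)
    also have "\<dots> = y i"
      using that by (rule d_step)
    finally show ?thesis .
  qed
  then show ?thesis by blast
qed

definition rank_below :: "nat \<Rightarrow> (nat \<Rightarrow> real) \<Rightarrow> nat \<Rightarrow> nat" where
  "rank_below L w i = card {j. j < L \<and> w j < w i}"

lemma rank_below_le_imp_le:
  assumes "i < L" "j < L" "rank_below L w i \<le> rank_below L w j"
  shows "w i \<le> w j"
proof (rule ccontr)
  assume "\<not> w i \<le> w j"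
  then have "insert j {k. k < L \<and> w k < w j} \<subseteq> {k. k < L \<and> w k < w i}"
    using assms by auto
  then have "card (insert j {k. k < L \<and> w k < w j}) \<le> rank_below L w i"
    unfolding rank_below_def by (intro card_mono) auto
  then show False
    using assms by (simp add: rank_below_def)
qed

lemma rank_below_less: "i < L \<Longrightarrow> rank_below L w i < L"
  unfolding rank_below_def
  by (rule psubset_card_mono[where B = "{..<L}", simplified]) auto

lemma inj_on_rank_below: "inj_on w {..<L} \<Longrightarrow> inj_on (rank_below L w) {..<L}"
  by (rule inj_onI) (metis antisym inj_onD lessThan_iff order_refl rank_below_le_imp_le)

lemma rank_below_image: "inj_on w {..<L} \<Longrightarrow> rank_below L w ` {..<L} = {..<L}"
  using rank_below_less inj_on_rank_below by (intro endo_inj_surj) auto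

lemma card_rank_below_less:
  assumes "inj_on w {..<L}" "n \<le> L"
  shows "card {i. i < L \<and> rank_below L w i < n} = n"
proof -
  have "rank_below L w ` {i. i < L \<and> rank_below L w i < n} = {..<n}"
    using rank_below_image[OF assms(1)] assms(2) by (auto simp: image_iff)
  moreover have "inj_on (rank_below L w) {i. i < L \<and> rank_below L w i < n}"
    using inj_on_rank_below[OF assms(1)] by (rule inj_on_subset) auto
  ultimately show ?thesis
    by (metis card_image card_lessThan)
qed

lemma card_above_eq:
  assumes inj: "inj_on w {..<L}" and i: "i < L"
  shows "card {j. j < L \<and> w i < w j} = L - 1 - rank_below L w i"
proof -
  let ?A = "{j. j < L \<and> w i < w j}" and ?B = "{j. j < L \<and> w j < w i}"
  have "w j < w i \<or> w i < w j" if "j < L" "j \<noteq> i" for j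
    using inj i that by (metis inj_onD lessThan_iff neq_iff)
  then have "{..<L} = insert i (?A \<union> ?B)"
    using i by auto
  then have "L = card (insert i (?A \<union> ?B))"
    by (metis card_lessThan)
  also have "\<dots> = Suc (card (?A \<union> ?B))"
    by (intro card_insert_disjoint) auto
  also have "card (?A \<union> ?B) = card ?A + rank_below L w i"
    unfolding rank_below_def by (rule card_Un_disjoint) auto
  finally show ?thesis by simp
qed

section \<open>The optimal profile\<close>

lemma nonneg_sum_one_imp_unit_vector:
  fixes v :: "nat \<Rightarrow> int"
  assumes nonneg: "\<And>i. i < L \<Longrightarrow> 0 \<le> v i" and sum1: "(\<Sum>i<L. v i) = 1"
  shows "\<exists>j<L. \<forall>i<L. v i = (if i = j then 1 else 0)"
proof -
  obtain j where j: "j < L" "0 < v j"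
  proof (rule ccontr)
    assume "\<not> thesis"
    then have "(\<Sum>i<L. v i) \<le> 0"
      using that by (intro sum_nonpos) (meson lessThan_iff not_le)
    then show False
      using sum1 by simp
  qed
  have rest: "(\<Sum>i\<in>{..<L} - {j}. v i) = 1 - v j"
    using j sum1 by (simp add: sum_diff1)
  moreover have "0 \<le> (\<Sum>i\<in>{..<L} - {j}. v i)"
    using nonneg by (intro sum_nonneg) auto
  ultimately have "v j = 1" "(\<Sum>i\<in>{..<L} - {j}. v i) = 0"
    using j by linarith+
  moreover have "i < L \<Longrightarrow> i \<noteq> j \<Longrightarrow> v i = 0" for i
    using \<open>(\<Sum>i\<in>{..<L} - {j}. v i) = 0\<close> nonneg by (subst (asm) sum_nonneg_eq_0_iff) auto
  ultimately show ?thesis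
    using j by auto
qed

lemma sum_moment_delta: "j < L \<Longrightarrow> (\<Sum>i<L. int i * (if i = j then 1 else 0)) = int j"
  by (simp add: if_distrib[of "\<lambda>x. int _ * x"] cong: if_cong)

text \<open>A profile lying below \<open>f\<close> with one unit less in total misses exactly one unit; the
  first moment modulo \<open>L\<close> tells where.\<close>
lemma unit_deficit_determined_by_moment:
  fixes u f :: "nat \<Rightarrow> int"
  assumes le: "\<And>i. i < L \<Longrightarrow> u i \<le> f i" and sum_u: "(\<Sum>i<L. u i) = (\<Sum>i<L. f i) - 1"
    and k: "k < L"
    and moment_u: "(\<Sum>i<L. int i * u i) mod int L
      = (\<Sum>i<L. int i * (f i - (if i = k then 1 else 0))) mod int L"
  shows "\<forall>i<L. u i = f i - (if i = k then 1 else 0)"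
proof -
  have "(\<Sum>i<L. f i - u i) = 1"
    using sum_u by (simp add: sum_subtractf)
  then obtain j where j: "j < L" and u_f: "\<forall>i<L. u i = f i - (if i = j then 1 else 0)"
    using nonneg_sum_one_imp_unit_vector[of L "\<lambda>i. f i - u i"] le
    by (force simp: algebra_simps)
  define F where "F = (\<Sum>i<L. int i * f i)"
  have "(\<Sum>i<L. int i * u i) = F - int j"
    using u_f j by (simp add: F_def right_diff_distrib sum_subtractf sum_moment_delta)
  moreover have "(\<Sum>i<L. int i * (f i - (if i = k then 1 else 0))) = F - int k"
    using k by (simp add: F_def right_diff_distrib sum_subtractf sum_moment_delta)
  ultimately have dvd: "int L dvd int k - int j"
    using moment_u by (simp add: mod_eq_dvd_iff)
  have "j = k"
  proof (rule ccontr)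
    assume "j \<noteq> k"
    then have "int L \<le> \<bar>int k - int j\<bar>"
      using dvd_imp_le_int[OF _ dvd] by simp
    then show False
      using j k by linarith
  qed
  then show ?thesis
    using u_f by simp
qed

text \<open>The level is \<open>b = c + 1 + w\<^sub>a\<close> for the highest raised site \<open>a\<close>: below it no site can be
  raised to \<open>c + 2\<close>, nor can a site outside the \<open>n\<close> lowest be raised at all.\<close>
lemma step_profile_unique_below_level:
  fixes w :: "nat \<Rightarrow> real" and c :: int
  assumes inj: "inj_on w {..<L}" and w: "\<And>i. i < L \<Longrightarrow> -1/2 \<le> w i \<and> w i < 1/2"
    and n: "1 \<le> n" "n \<le> L" and k: "k < L"
  defines "e \<equiv> \<lambda>i. c + (if rank_below L w i < n then 1 else 0) - (if i = k then 1 else 0)"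
  obtains b where "\<And>i. i < L \<Longrightarrow> of_int (e i) + w i \<le> b"
    and "\<And>u. \<lbrakk>\<And>i. i < L \<Longrightarrow> of_int (u i) + w i \<le> b; (\<Sum>i<L. u i) = (\<Sum>i<L. e i);
            (\<Sum>i<L. int i * u i) mod int L = (\<Sum>i<L. int i * e i) mod int L\<rbrakk>
          \<Longrightarrow> \<forall>i<L. u i = e i"
proof -
  obtain a where a: "a < L" "rank_below L w a = n - 1"
    using rank_below_image[OF inj] n by (metis diff_less imageE lessThan_iff less_le_trans zero_less_one)
  define f where "f i = c + (if rank_below L w i < n then 1 else 0)" for i
  have e_f: "e = (\<lambda>i. f i - (if i = k then 1 else 0))"
    by (simp add: e_def f_def)
  let ?b = "of_int c + 1 + w a"
  show thesis
  proof
    fix i assume i: "i < L"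
    show "of_int (e i) + w i \<le> ?b"
    proof (cases "rank_below L w i < n \<and> i \<noteq> k")
      case True
      then have "w i \<le> w a"
        using rank_below_le_imp_le[of i L a w] a i by auto
      then show ?thesis
        using True by (simp add: e_def)
    next
      case False
      then have "e i \<le> c"
        by (auto simp: e_def)
      then show ?thesis
        using w[OF i] w[OF a(1)] by linarith
    qed
  next
    fix u :: "nat \<Rightarrow> int"
    assume below: "\<And>i. i < L \<Longrightarrow> of_int (u i) + w i \<le> ?b"
      and sum_u: "(\<Sum>i<L. u i) = (\<Sum>i<L. e i)"
      and moment_u: "(\<Sum>i<L. int i * u i) mod int L = (\<Sum>i<L. int i * e i) mod int L"
    have "u i \<le> f i" if i: "i < L" for i
    proof -
      have "real_of_int (u i) < real_of_int (c + 2)"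
        using below[OF i] w[OF i] w[OF a(1)] unfolding of_int_add by linarith
      moreover have "real_of_int (u i) < real_of_int (c + 1)" if "\<not> rank_below L w i < n"
      proof -
        have "w a \<le> w i" "a \<noteq> i"
          using rank_below_le_imp_le[of a L i w] a i that n by auto
        then have "w a < w i"
          using inj_onD[OF inj, of a i] a i by fastforce
        then show ?thesis
          using below[OF i] unfolding of_int_add by linarith
      qed
      ultimately show ?thesis
        unfolding f_def of_int_less_iff by auto
    qed
    moreover have "(\<Sum>i<L. u i) = (\<Sum>i<L. f i) - 1"
      using sum_u k by (simp add: e_f sum_subtractf)
    ultimately show "\<forall>i<L. u i = e i"
      using unit_deficit_determined_by_moment[OF _ _ k] moment_u unfolding e_f by blast
  qed
qed

section \<open>The greedy vector \<open>J\<close>\<close>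

lemma omega_bounds: "-1/2 \<le> omega L \<alpha> i \<and> omega L \<alpha> i < 1/2"
  unfolding omega_def rnd_def
  using of_int_round_le[of "lap L \<alpha> i"] of_int_round_gt[of "lap L \<alpha> i"] by linarith

lemma Ssum_bounds:
  assumes "0 < L"
  shows "2 * Ssum L \<alpha> \<le> int L" "- 2 * Ssum L \<alpha> < int L"
proof -
  have "(\<Sum>i<L. omega L \<alpha> i) = - of_int (Ssum L \<alpha>)"
    using sum_lap[of L \<alpha>] by (simp add: omega_def Ssum_def sum_subtractf)
  moreover have "(\<Sum>i<L. - 1/2) \<le> (\<Sum>i<L. omega L \<alpha> i)"
    by (rule sum_mono) (use omega_bounds in auto)
  moreover have "(\<Sum>i<L. omega L \<alpha> i) < (\<Sum>i<L. 1/2)"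
    by (rule sum_strict_mono) (use assms omega_bounds in auto)
  ultimately show "2 * Ssum L \<alpha> \<le> int L" "- 2 * Ssum L \<alpha> < int L"
    by simp_all
qed

text \<open>For \<open>S < 0\<close>, putting \<open>-1\<close> on the \<open>|S| - 1\<close> largest \<open>\<omega>\<^sub>i\<close> is the same as starting
  from the level \<open>-1\<close> and raising the \<open>L + S + 1\<close> smallest.\<close>
lemma Jvec_step_form:
  assumes L: "0 < L" and inj: "inj_on (omega L \<alpha>) {..<L}"
  obtains n c where "1 \<le> n" "n \<le> L" "c * int L + int n = Ssum L \<alpha> + 1"
    "\<And>i. i < L \<Longrightarrow> Jvec L \<alpha> i = c + (if rank_below L (omega L \<alpha>) i < n then 1 else 0)"
proof (cases "0 \<le> Ssum L \<alpha>")
  case True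
  show thesis
  proof (rule that[of "nat (Ssum L \<alpha> + 1)" 0])
    show "nat (Ssum L \<alpha> + 1) \<le> L"
      using Ssum_bounds[OF L, of \<alpha>] by linarith
    show "Jvec L \<alpha> i = 0 + (if rank_below L (omega L \<alpha>) i < nat (Ssum L \<alpha> + 1) then 1 else 0)" for i
      using True by (simp add: Jvec_def rank_below_def zless_nat_eq_int_zless)
  qed (use True in simp_all)
next
  case False
  show thesis
  proof (rule that[of "nat (int L + Ssum L \<alpha> + 1)" "-1"])
    show "1 \<le> nat (int L + Ssum L \<alpha> + 1)"
      using Ssum_bounds[OF L, of \<alpha>] by linarith
    fix i assume i: "i < L"
    have "int (card {j. j < L \<and> omega L \<alpha> i < omega L \<alpha> j}) = int L - 1 - int (rank_below L (omega L \<alpha>) i)"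
      using card_above_eq[OF inj i] rank_below_less[OF i, of "omega L \<alpha>"] by (simp add: of_nat_diff Suc_le_eq)
    then show "Jvec L \<alpha> i = -1 + (if rank_below L (omega L \<alpha>) i < nat (int L + Ssum L \<alpha> + 1) then 1 else 0)"
      using False by (auto simp: Jvec_def zless_nat_eq_int_zless)
  qed (use False Ssum_bounds[OF L, of \<alpha>] in simp_all)
qed

definition opt_profile :: "nat \<Rightarrow> (nat \<Rightarrow> real) \<Rightarrow> nat \<Rightarrow> int" where
  "opt_profile L \<alpha> i = Jvec L \<alpha> i - (if int i = kplus L \<alpha> then 1 else 0)"

lemma kplus_site:
  assumes "0 < L"
  obtains k where "k < L" "kplus L \<alpha> = int k"
proof -
  have "0 \<le> kplus L \<alpha>" "kplus L \<alpha> < int L"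
    using assms by (simp_all add: kplus_def)
  then show thesis
    by (intro that[of "nat (kplus L \<alpha>)"]) (simp_all add: nat_less_iff)
qed

lemma sum_opt_profile:
  assumes L: "0 < L" and inj: "inj_on (omega L \<alpha>) {..<L}"
  shows "(\<Sum>i<L. opt_profile L \<alpha> i) = Ssum L \<alpha>"
proof -
  obtain n c where n: "1 \<le> n" "n \<le> L" and sum_step: "c * int L + int n = Ssum L \<alpha> + 1"
    and J: "\<And>i. i < L \<Longrightarrow> Jvec L \<alpha> i = c + (if rank_below L (omega L \<alpha>) i < n then 1 else 0)"
    using Jvec_step_form[OF L inj] by blast
  obtain k where k: "k < L" "kplus L \<alpha> = int k"
    using kplus_site[OF L] by blast
  have "(\<Sum>i<L. opt_profile L \<alpha> i)
      = (\<Sum>i<L. c + of_bool (rank_below L (omega L \<alpha>) i < n) - of_bool (i = k))"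
    by (rule sum.cong) (simp_all add: opt_profile_def J k)
  also have "\<dots> = c * int L + int n - 1"
  proof -
    have "{x. x = k \<and> x < L} = {k}"
      using k by auto
    then show ?thesis
      using card_rank_below_less[OF inj n(2)] by (simp add: sum.distrib sum_subtractf Int_def)
  qed
  finally show ?thesis
    using sum_step by simp
qed

lemma moment_opt_profile:
  assumes L: "0 < L"
  shows "(\<Sum>i<L. int i * opt_profile L \<alpha> i) mod int L = (\<Sum>i<L. int i * rnd L \<alpha> i) mod int L"
proof -
  obtain k where k: "k < L" "kplus L \<alpha> = int k"
    using kplus_site[OF L] by blast
  define MJ where "MJ = (\<Sum>i<L. int i * Jvec L \<alpha> i)"
  define MR where "MR = (\<Sum>i<L. int i * rnd L \<alpha> i)"
  have "int k = (MJ - MR) mod int L"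
    unfolding k(2)[symmetric] kplus_def MJ_def MR_def by (simp add: algebra_simps sum.distrib sum_subtractf)
  moreover have "(\<Sum>i<L. int i * opt_profile L \<alpha> i) = MJ - int k"
    using k by (simp add: MJ_def opt_profile_def right_diff_distrib sum_subtractf sum_moment_delta)
  ultimately have "(\<Sum>i<L. int i * opt_profile L \<alpha> i) mod int L = (MJ - (MJ - MR)) mod int L"
    by (simp add: mod_diff_right_eq)
  then show ?thesis
    by (simp add: MR_def)
qed

lemma opt_profile_unique_below_level:
  assumes L: "0 < L" and inj: "inj_on (omega L \<alpha>) {..<L}"
  obtains b where "\<And>i. i < L \<Longrightarrow> of_int (opt_profile L \<alpha> i) + omega L \<alpha> i \<le> b"
    and "\<And>u. \<lbrakk>\<And>i. i < L \<Longrightarrow> of_int (u i) + omega L \<alpha> i \<le> b;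
            (\<Sum>i<L. u i) = (\<Sum>i<L. opt_profile L \<alpha> i);
            (\<Sum>i<L. int i * u i) mod int L = (\<Sum>i<L. int i * opt_profile L \<alpha> i) mod int L\<rbrakk>
          \<Longrightarrow> \<forall>i<L. u i = opt_profile L \<alpha> i"
proof -
  obtain n c where n: "1 \<le> n" "n \<le> L" and "c * int L + int n = Ssum L \<alpha> + 1"
    and J: "\<And>i. i < L \<Longrightarrow> Jvec L \<alpha> i = c + (if rank_below L (omega L \<alpha>) i < n then 1 else 0)"
    using Jvec_step_form[OF L inj] by blast
  obtain k where k: "k < L" "kplus L \<alpha> = int k"
    using kplus_site[OF L] by blast
  define e where "e i = c + (if rank_below L (omega L \<alpha>) i < n then 1 else 0) - (if i = k then 1 else 0)" for i
  have opt_e: "opt_profile L \<alpha> i = e i" if "i < L" for i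
    using that by (simp add: opt_profile_def J k e_def)
  have sums: "(\<Sum>i<L. f i (opt_profile L \<alpha> i)) = (\<Sum>i<L. f i (e i))" for f :: "nat \<Rightarrow> int \<Rightarrow> int"
    by (rule sum.cong) (simp_all add: opt_e)
  obtain b where e_below: "\<And>i. i < L \<Longrightarrow> of_int (e i) + omega L \<alpha> i \<le> b"
    and e_unique: "\<And>u. \<lbrakk>\<And>i. i < L \<Longrightarrow> of_int (u i) + omega L \<alpha> i \<le> b; (\<Sum>i<L. u i) = (\<Sum>i<L. e i);
        (\<Sum>i<L. int i * u i) mod int L = (\<Sum>i<L. int i * e i) mod int L\<rbrakk> \<Longrightarrow> \<forall>i<L. u i = e i"
    using step_profile_unique_below_level[OF inj omega_bounds n k(1), of c] unfolding e_def by blast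
  show thesis
  proof (rule that)
    show "of_int (opt_profile L \<alpha> i) + omega L \<alpha> i \<le> b" if "i < L" for i
      using e_below[OF that] opt_e[OF that] by simp
    fix u assume "\<And>i. i < L \<Longrightarrow> of_int (u i) + omega L \<alpha> i \<le> b"
      and "(\<Sum>i<L. u i) = (\<Sum>i<L. opt_profile L \<alpha> i)"
      and "(\<Sum>i<L. int i * u i) mod int L = (\<Sum>i<L. int i * opt_profile L \<alpha> i) mod int L"
    then have "\<forall>i<L. u i = e i"
      using sums[of "\<lambda>_ x. x"] sums[of "\<lambda>i x. int i * x"] by (intro e_unique) simp_all
    then show "\<forall>i<L. u i = opt_profile L \<alpha> i"
      using opt_e by simp
  qed
qed

section \<open>Threshold configurations\<close>

lemma maxz_eq: "maxz L \<alpha> m = Max (zcoord L \<alpha> m ` {..<L})"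
  unfolding maxz_def by (rule arg_cong[where f = Max]) auto

lemma zcoord_le_maxz: "i < L \<Longrightarrow> zcoord L \<alpha> m i \<le> maxz L \<alpha> m"
  unfolding maxz_eq by (rule Max_ge) auto

lemma maxz_le: "0 < L \<Longrightarrow> (\<And>i. i < L \<Longrightarrow> zcoord L \<alpha> m i \<le> b) \<Longrightarrow> maxz L \<alpha> m \<le> b"
  unfolding maxz_eq by (rule Max.boundedI) auto

lemma maxz_cong: "(\<And>i. i < L \<Longrightarrow> lap L m1 i = lap L m2 i) \<Longrightarrow> maxz L \<alpha> m1 = maxz L \<alpha> m2"
  unfolding maxz_eq zcoord_def by (rule arg_cong[where f = Max]) auto

lemma zcoord_eq: "zcoord L \<alpha> m i = of_int (lap L m i + rnd L \<alpha> i) + omega L \<alpha> i"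
  by (simp add: zcoord_def omega_def)

lemma threshold_config_iff_lap_eq:
  assumes ms_below: "maxz L \<alpha> ms \<le> b"
    and forced: "\<And>m. maxz L \<alpha> m \<le> b \<Longrightarrow> \<forall>i<L. lap L m i = lap L ms i"
  shows "threshold_config L \<alpha> m \<longleftrightarrow> (\<forall>i<L. lap L m i = lap L ms i)"
proof
  assume "threshold_config L \<alpha> m"
  then have "maxz L \<alpha> m \<le> maxz L \<alpha> ms"
    unfolding threshold_config_def by blast
  then show "\<forall>i<L. lap L m i = lap L ms i"
    using ms_below by (intro forced) simp
next
  assume "\<forall>i<L. lap L m i = lap L ms i"
  then have m_ms: "maxz L \<alpha> m = maxz L \<alpha> ms"
    by (intro maxz_cong) simp
  show "threshold_config L \<alpha> m"
    unfolding threshold_config_def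
  proof
    fix m'
    show "maxz L \<alpha> m \<le> maxz L \<alpha> m'"
    proof (rule ccontr)
      assume "\<not> maxz L \<alpha> m \<le> maxz L \<alpha> m'"
      moreover have "maxz L \<alpha> m' = maxz L \<alpha> ms" if "maxz L \<alpha> m' \<le> b"
        using forced[OF that] by (intro maxz_cong) simp
      ultimately show False
        using m_ms ms_below by linarith
    qed
  qed
qed

lemma threshold_config_characterization:
  assumes L: "0 < L" and inj: "inj_on (omega L \<alpha>) {..<L}"
  obtains ms where "\<forall>i<L. lap L ms i = opt_profile L \<alpha> i - rnd L \<alpha> i"
    and "\<And>m. threshold_config L \<alpha> m \<longleftrightarrow> (\<forall>i<L. lap L m i = lap L ms i)"
proof -
  let ?u = "opt_profile L \<alpha>" and ?r = "rnd L \<alpha>"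
  obtain b where u_below: "\<And>i. i < L \<Longrightarrow> of_int (?u i) + omega L \<alpha> i \<le> b"
    and u_unique: "\<And>u. \<lbrakk>\<And>i. i < L \<Longrightarrow> of_int (u i) + omega L \<alpha> i \<le> b; (\<Sum>i<L. u i) = (\<Sum>i<L. ?u i);
        (\<Sum>i<L. int i * u i) mod int L = (\<Sum>i<L. int i * ?u i) mod int L\<rbrakk> \<Longrightarrow> \<forall>i<L. u i = ?u i"
    using opt_profile_unique_below_level[OF L inj] by blast
  have sum_u: "(\<Sum>i<L. ?u i) = (\<Sum>i<L. ?r i)" and moment_u: "(\<Sum>i<L. int i * ?u i) mod int L = (\<Sum>i<L. int i * ?r i) mod int L"
    using sum_opt_profile[OF L inj] moment_opt_profile[OF L] by (simp_all add: Ssum_def)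
  obtain ms where ms: "\<forall>i<L. lap L ms i = ?u i - ?r i"
    using lap_surj[where y = "\<lambda>i. ?u i - ?r i"] sum_u moment_u
    by (auto simp: sum_subtractf right_diff_distrib mod_eq_dvd_iff)
  have forced: "\<forall>i<L. lap L m i = lap L ms i" if m_below: "maxz L \<alpha> m \<le> b" for m
  proof -
    define u where "u i = lap L m i + ?r i" for i
    have "(\<Sum>i<L. int i * u i) mod int L = (\<Sum>i<L. int i * ?r i) mod int L"
      using dvd_moment_lap[of L m] by (auto simp: u_def distrib_left sum.distrib elim!: dvdE)
    then have "(\<Sum>i<L. int i * u i) mod int L = (\<Sum>i<L. int i * ?u i) mod int L"
      using moment_u by simp
    moreover have "of_int (u i) + omega L \<alpha> i \<le> b" if "i < L" for i
      using zcoord_le_maxz[OF that, of \<alpha> m] m_below by (simp add: u_def zcoord_eq)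
    moreover have "(\<Sum>i<L. u i) = (\<Sum>i<L. ?u i)"
      using sum_lap[of L m] sum_u by (simp add: u_def sum.distrib)
    ultimately have "\<forall>i<L. u i = ?u i"
      using u_unique by blast
    then show ?thesis
      using ms by (auto simp: u_def)
  qed
  have ms_below: "maxz L \<alpha> ms \<le> b"
  proof (rule maxz_le[OF L])
    fix i assume "i < L"
    then have "lap L ms i + ?r i = ?u i"
      using ms by simp
    then show "zcoord L \<alpha> ms i \<le> b"
      using u_below[OF \<open>i < L\<close>] by (simp add: zcoord_eq)
  qed
  show thesis
    using that ms threshold_config_iff_lap_eq[OF ms_below forced] by blast
qed

section \<open>The disorder almost surely separates the \<open>\<omega>\<^sub>i\<close>\<close>

text \<open>Integrating out the coordinate \<open>p\<close> first, the set is a single point of \<open>M p\<close>.\<close>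
lemma null_sets_coordinate_graph:
  fixes M :: "'i \<Rightarrow> real measure" and h :: "('i \<Rightarrow> real) \<Rightarrow> real"
  assumes M: "product_sigma_finite M" and I: "finite I" "p \<in> I"
    and sets_Mp: "sets (M p) = sets borel" and no_atoms: "\<And>x. emeasure (M p) {x} = 0"
    and h: "h \<in> borel_measurable (PiM I M)" and h_indep: "\<And>\<alpha> t. h (\<alpha>(p := t)) = h \<alpha>"
  shows "{\<alpha> \<in> space (PiM I M). \<alpha> p = h \<alpha>} \<in> null_sets (PiM I M)"
proof -
  let ?N = "{\<alpha> \<in> space (PiM I M). \<alpha> p = h \<alpha>}"
  define J where "J = I - {p}"
  have I_eq: "I = insert p J" and J: "finite J" "p \<notin> J"
    using I by (auto simp: J_def)
  have "(\<lambda>\<alpha>. \<alpha> p) \<in> borel_measurable (PiM I M)"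
    using measurable_component_singleton[OF I(2), of M] measurable_cong_sets[OF refl sets_Mp]
    by blast
  then have N: "?N \<in> sets (PiM I M)"
    using h by (rule measurable_equality_set)
  then have "indicator ?N \<in> borel_measurable (PiM (insert p J) M)"
    unfolding I_eq[symmetric] by (rule borel_measurable_indicator)
  then have "integral\<^sup>N (PiM (insert p J) M) (indicator ?N)
      = (\<integral>\<^sup>+ x. (\<integral>\<^sup>+ y. indicator ?N (x(p := y)) \<partial>M p) \<partial>PiM J M)"
    by (rule product_sigma_finite.product_nn_integral_insert[OF M J])
  then have "emeasure (PiM I M) ?N = (\<integral>\<^sup>+ x. (\<integral>\<^sup>+ y. indicator ?N (x(p := y)) \<partial>M p) \<partial>PiM J M)"
    using N by (simp flip: I_eq)
  also have "\<dots> = (\<integral>\<^sup>+ x. (\<integral>\<^sup>+ y. indicator {h (x(p := 0))} y \<partial>M p) \<partial>PiM J M)"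
  proof (intro nn_integral_cong)
    fix x y assume "x \<in> space (PiM J M)" "y \<in> space (M p)"
    then have "x(p := y) \<in> space (PiM I M)"
      using I by (auto simp: space_PiM PiE_def extensional_def J_def)
    moreover have "h (x(p := y)) = h (x(p := 0))"
      using h_indep[of "x(p := y)" 0] h_indep[of x] by simp
    ultimately show "indicator ?N (x(p := y)) = (indicator {h (x(p := 0))} y :: ennreal)"
      by (auto simp: indicator_def)
  qed
  also have "\<dots> = 0"
    using N sets_Mp no_atoms by simp
  finally show ?thesis
    using N by (intro null_setsI) simp_all
qed

lemma emeasure_lborel_Int_singleton: "emeasure lborel (A \<inter> {x :: real}) = 0"
  by (cases "x \<in> A") auto

lemma disorder_product_sigma_finite:
  "product_sigma_finite (\<lambda>_ :: nat. uniform_measure lborel {-1/2<..<1/2 :: real})"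
proof -
  have "prob_space (uniform_measure lborel {-1/2<..<1/2 :: real})"
    by (rule prob_space_uniform_measure) auto
  then show ?thesis
    unfolding product_sigma_finite_def by (simp add: prob_space_imp_sigma_finite)
qed

lemma measurable_component_disorder: "i < L \<Longrightarrow> (\<lambda>\<alpha>. \<alpha> i) \<in> borel_measurable (disorder L)"
  unfolding disorder_def by measurable

lemma measurable_lap_disorder: "i < L \<Longrightarrow> (\<lambda>\<alpha>. lap L \<alpha> i :: real) \<in> borel_measurable (disorder L)"
proof -
  assume "i < L"
  then have [measurable]: "(\<lambda>\<alpha>. \<alpha> (k mod L)) \<in> borel_measurable (disorder L)" for k
    by (intro measurable_component_disorder) simp
  show ?thesis
    unfolding lap_def by measurable
qed

text \<open>Changing \<open>\<alpha>\<^sub>i\<close> alone moves \<open>\<Delta>\<alpha>\<^sub>i\<close> with slope \<open>-2\<close> and \<open>\<Delta>\<alpha>\<^sub>j\<close> with slope \<open>\<ge> 0\<close>.\<close>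
lemma null_sets_lap_diff_eq:
  assumes i: "i < L" and j: "j < L" and ij: "i \<noteq> j"
  shows "{\<alpha> \<in> space (disorder L). lap L \<alpha> i - lap L \<alpha> j = (c0 :: real)} \<in> null_sets (disorder L)"
proof -
  define c :: real where "c = - 2 - (of_bool (prev_site L j = i) + of_bool (next_site L j = i))"
  have c: "c < 0"
    by (simp add: c_def)
  have "prev_site L i \<noteq> i" "next_site L i \<noteq> i"
    using i j ij by (auto simp: prev_site_eq next_site_eq)
  then have slope: "lap L (\<alpha>(i := t)) i - lap L (\<alpha>(i := t)) j = lap L \<alpha> i - lap L \<alpha> j + c * (t - \<alpha> i)"
    for \<alpha> t
    using i j ij by (simp add: lap_eq c_def algebra_simps)
  define h where "h \<alpha> = \<alpha> i - (lap L \<alpha> i - lap L \<alpha> j - c0) / c" for \<alpha> :: "nat \<Rightarrow> real"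
  have h_indep: "h (\<alpha>(i := t)) = h \<alpha>" for \<alpha> t
    using c by (simp add: h_def slope field_simps)
  have h_meas: "h \<in> borel_measurable (disorder L)"
    using measurable_component_disorder[OF i] measurable_lap_disorder[OF i] measurable_lap_disorder[OF j]
    unfolding h_def by measurable
  have "{\<alpha> \<in> space (disorder L). \<alpha> i = h \<alpha>} \<in> null_sets (disorder L)"
    unfolding disorder_def
    by (rule null_sets_coordinate_graph[OF disorder_product_sigma_finite])
      (use i h_indep h_meas in \<open>auto simp: disorder_def emeasure_lborel_Int_singleton\<close>)
  moreover have "{\<alpha> \<in> space (disorder L). lap L \<alpha> i - lap L \<alpha> j = c0} = {\<alpha> \<in> space (disorder L). \<alpha> i = h \<alpha>}"
    using c by (auto simp: h_def field_simps)
  ultimately show ?thesis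
    by simp
qed

lemma AE_inj_on_omega: "AE \<alpha> in disorder L. inj_on (omega L \<alpha>) {..<L}"
proof (rule AE_I')
  define N where "N = (\<lambda>(i :: nat, j :: nat, n :: int). if i < L \<and> j < L \<and> i \<noteq> j then
      {\<alpha> \<in> space (disorder L). lap L \<alpha> i - lap L \<alpha> j = of_int n} else {})"
  show "(\<Union>x. N x) \<in> null_sets (disorder L)"
    by (rule null_sets_UN) (auto simp: N_def intro: null_sets_lap_diff_eq)
  show "{\<alpha> \<in> space (disorder L). \<not> inj_on (omega L \<alpha>) {..<L}} \<subseteq> (\<Union>x. N x)"
  proof safe
    fix \<alpha> assume "\<alpha> \<in> space (disorder L)" "\<not> inj_on (omega L \<alpha>) {..<L}"
    then obtain i j where "i < L" "j < L" "i \<noteq> j" "omega L \<alpha> i = omega L \<alpha> j"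
      by (auto simp: inj_on_def)
    then have "\<alpha> \<in> N (i, j, rnd L \<alpha> i - rnd L \<alpha> j)"
      using \<open>\<alpha> \<in> space (disorder L)\<close> by (simp add: N_def omega_def)
    then show "\<alpha> \<in> (\<Union>x. N x)" by blast
  qed
qed

theorem theorem1:
  fixes L :: nat
  assumes "0 < L"
  shows "AE \<alpha> in disorder L.
           (\<exists>m. threshold_config L \<alpha> m)
         \<and> (\<forall>m1 m2. threshold_config L \<alpha> m1 \<and> threshold_config L \<alpha> m2 \<longrightarrow>
               (\<exists>c::int. \<forall>i<L. m1 i = m2 i + c))
         \<and> (\<forall>m. threshold_config L \<alpha> m \<longrightarrow>
               (\<forall>i<L. lap L m i = - rnd L \<alpha> i + Jvec L \<alpha> i
                                  - (if int i = kplus L \<alpha> then 1 else 0)))"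
  using AE_inj_on_omega
proof (rule eventually_mono)
  fix \<alpha> assume "inj_on (omega L \<alpha>) {..<L}"
  then obtain ms where lap_ms: "\<forall>i<L. lap L ms i = opt_profile L \<alpha> i - rnd L \<alpha> i"
    and threshold: "\<And>m. threshold_config L \<alpha> m \<longleftrightarrow> (\<forall>i<L. lap L m i = lap L ms i)"
    using threshold_config_characterization[OF assms] by blast
  show "(\<exists>m. threshold_config L \<alpha> m)
         \<and> (\<forall>m1 m2. threshold_config L \<alpha> m1 \<and> threshold_config L \<alpha> m2 \<longrightarrow>
               (\<exists>c::int. \<forall>i<L. m1 i = m2 i + c))
         \<and> (\<forall>m. threshold_config L \<alpha> m \<longrightarrow>
               (\<forall>i<L. lap L m i = - rnd L \<alpha> i + Jvec L \<alpha> i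
                                  - (if int i = kplus L \<alpha> then 1 else 0)))"
  proof (intro conjI allI impI)
    show "\<exists>m. threshold_config L \<alpha> m"
      using threshold by blast
    fix m1 m2 assume "threshold_config L \<alpha> m1 \<and> threshold_config L \<alpha> m2"
    then show "\<exists>c. \<forall>i<L. m1 i = m2 i + c"
      using threshold lap_eq_imp_shift[of L m1 m2] by simp
  next
    fix m i assume "threshold_config L \<alpha> m" "i < L"
    then show "lap L m i = - rnd L \<alpha> i + Jvec L \<alpha> i - (if int i = kplus L \<alpha> then 1 else 0)"
      using threshold lap_ms by (simp add: opt_profile_def)
  qed
qed

end
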